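(* Let $b_0=1$ and let $b_1,\dots,b_d$ be nonzero reals with $b_d>0$; put $a_k=b_k/|b_{k-1}|$. Then $$g_d(b_1,\dots,b_d)=f_d\Big(b_1,\frac{b_2}{b_1},\dots,\frac{b_d}{b_{d-1}}\Big)=\operatorname{sign}\Big(\prod_{i=1}^d b_i\Big)\sum_{s_1=1}^{\overline{a_1}}\ \sum_{s_2=1}^{\overline{a_2s_1}}\cdots\sum_{s_d=1}^{\overline{a_ds_{d-1}}}1,$$ where the sums are in the extended sense and $\overline{a_{i+1}s_i}$ means $a_{i+1}s_i$ if $a_{i+1}>0$ and $-a_{i+1}s_i-1$ if $a_{i+1}<0$ (similarly $\overline{a_1}=a_1$ or $-a_1-1$ according to the sign of $a_1$).
   Context: Let $B_k(x)$ be the Bernoulli polynomials ($te^{tx}/(e^t-1)=\sum_k B_k(x)t^k/k!$), $B_k=B_k(0)$, and $P_k(x)=(B_{k+1}(x+1)-B_{k+1})/(k+1)$. Extended sum: for a polynomial $h(s)=\sum_{k\ge0}h_ks^k$ (coefficients in a polynomial ring over $\mathbb R$) and upper limit $u$, $\sum_{s=1}^{u}h:=h_0u+\sum_{k\ge1}h_kP_k(u)$; this agrees with the usual sum for positive integers $u$. $f_d(a_1,\dots,a_d)=\sum_{s_1=1}^{a_1}\sum_{s_2=1}^{a_2s_1}\cdots\sum_{s_d=1}^{a_ds_{d-1}}1$, evaluated from the innermost sum outward with extended sums (a polynomial in $a_1,\dots,a_d$). With $b_0=1$, $g_d(b_1,\dots,b_d)=f_d(b_1/b_0,b_2/b_1,\dots,b_d/b_{d-1})$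 for nonzero reals $b_i$. *)

theory Defs
  imports "HOL-Computational_Algebra.Computational_Algebra"
begin

definition bern_gf :: "real fps" where
  "bern_gf = fps_X div (fps_exp 1 - 1)"

text \<open>Bernoulli polynomial B_k(x): k! times the coefficient of t^k in
  (t/(e^t-1)) * e^{tx} = (sum_j b_j t^j) * (sum_m x^m t^m / m!), where b_j = bern_gf $ j.\<close>
definition bernpoly :: "nat \<Rightarrow> real poly" where
  "bernpoly k = smult (fact k) (\<Sum>m\<le>k. monom (bern_gf $ (k - m) / fact m) m)"

definition bernoulli_num :: "nat \<Rightarrow> real" where
  "bernoulli_num k = poly (bernpoly k) 0"

definition Ppoly :: "nat \<Rightarrow> real poly" where
  "Ppoly k = smult (1 / real (k + 1))
     (pcompose (bernpoly (k + 1)) [:1, 1:] - [:bernoulli_num (k + 1):])"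

text \<open>Extended sum sum_{s=1}^{u} h = h_0 u + sum_{k>=1} h_k P_k(u); the upper limit u
  is itself a polynomial in the next outer summation variable, so the result is one too.\<close>
definition ext_sum :: "real poly \<Rightarrow> real poly \<Rightarrow> real poly" where
  "ext_sum h u = smult (coeff h 0) u + (\<Sum>k\<in>{1..degree h}. smult (coeff h k) (pcompose (Ppoly k) u))"

text \<open>Nested extended sums with upper limits c_1 s_0, c_2 s_1, ..., c_d s_{d-1},
  evaluated innermost outward; result is a polynomial in s_0.\<close>
fun nested :: "real list \<Rightarrow> real poly" where
  "nested [] = 1"
| "nested (c # cs) = ext_sum (nested cs) [:0, c:]"

text \<open>f_d(a_1,...,a_d), with s_0 = 1 (so the outermost limit is a_1).\<close>
definition f_d :: "real list \<Rightarrow> real" where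
  "f_d as = poly (nested as) 1"

definition g_d :: "nat \<Rightarrow> (nat \<Rightarrow> real) \<Rightarrow> real" where
  "g_d d b = f_d (map (\<lambda>i. b i / b (i - 1)) [1..<Suc d])"

definition bar_limit :: "real \<Rightarrow> real poly" where
  "bar_limit c = (if c > 0 then [:0, c:] else [:-1, -c:])"

fun nested_bar :: "real list \<Rightarrow> real poly" where
  "nested_bar [] = 1"
| "nested_bar (c # cs) = ext_sum (nested_bar cs) (bar_limit c)"

definition f_bar :: "real list \<Rightarrow> real" where
  "f_bar as = poly (nested_bar as) 1"

end

theory Submission
  imports Defs
begin

(* The generating function t e^(tx)/(e^t - 1) is invariant under (t, x) -> (-t, 1-x), so
   B_n(-x) = (-1)^n B_n(x+1); hence P_k(-y-1) = (-1)^(k+1) P_k(y) and P_k(0) = 0 for k >= 1.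
   For extended sums this is the reflection  sum_{s=1}^{-u-1} h(s) = -h(0) - sum_{s=1}^{u} h(-s),
   so a sum whose upper limit c s has c < 0 equals minus a sum of h(-s) up to the barred limit
   -c s - 1, provided h(0) = 0.  Peeling off the outermost sum and inducting on d, the inner
   nested sum always vanishes at 0 (its own upper limit is then 0), and the signs collected
   along the way multiply to sgn(b_1 ... b_d). *)

lemma fps_exp_one_minus_one_nonzero: "fps_exp (1::real) - 1 \<noteq> 0"
proof
  assume "fps_exp (1::real) - 1 = 0"
  then have "(fps_exp (1::real) - 1) $ 1 = 0" by simp
  then show False by simp
qed

lemma bern_gf_times_exp_minus_one: "bern_gf * (fps_exp 1 - 1) = fps_X"
proof -
  have "subdegree (fps_exp (1::real) - 1) \<le> 1"
    by (rule subdegree_leI) simp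
  then show ?thesis
    unfolding bern_gf_def
    using fps_times_divide_eq[OF fps_exp_one_minus_one_nonzero] by simp
qed

lemma bern_gf_times_exp: "bern_gf * fps_exp 1 = fps_X + bern_gf"
  using bern_gf_times_exp_minus_one by (simp add: algebra_simps)

lemma bern_gf_compose_minus: "bern_gf oo - fps_X = fps_X + bern_gf"
proof -
  let ?E = "fps_exp (1::real)"
  have "(bern_gf oo - fps_X) * (fps_exp (-1) - 1) = - fps_X"
    using arg_cong[OF bern_gf_times_exp_minus_one, of "\<lambda>f. f oo - fps_X"]
    by (simp add: fps_compose_mult_distrib fps_compose_sub_distrib)
  then have "(bern_gf oo - fps_X) * (fps_exp (-1) * ?E - ?E) = - fps_X * ?E"
    by (metis mult.assoc left_diff_distrib mult_1)
  then have "(bern_gf oo - fps_X) * (?E - 1) = (fps_X + bern_gf) * (?E - 1)"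
    using bern_gf_times_exp by (simp add: algebra_simps flip: fps_exp_add_mult)
  then show ?thesis
    using fps_exp_one_minus_one_nonzero by simp
qed

lemma poly_bernpoly: "poly (bernpoly k) x = fact k * (fps_exp x * bern_gf) $ k"
  unfolding bernpoly_def fps_mult_nth fps_exp_nth
  by (simp add: poly_sum poly_monom atMost_atLeast0 sum_distrib_left mult_ac)

lemma bernpoly_reflect: "poly (bernpoly n) (- x) = (-1) ^ n * poly (bernpoly n) (x + 1)"
proof -
  have "(fps_exp (x + 1) * bern_gf) oo - fps_X = fps_exp (- x - 1) * (bern_gf * fps_exp 1)"
    by (simp add: fps_compose_mult_distrib bern_gf_compose_minus bern_gf_times_exp)
  also have "\<dots> = fps_exp (- x) * bern_gf"
    by (simp add: mult_ac flip: fps_exp_add_mult)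
  finally show ?thesis
    using fps_compose_uminus'[of "fps_exp (x + 1) * bern_gf"]
    by (simp add: poly_bernpoly fps_eq_iff)
qed

lemma bernoulli_num_odd:
  assumes "odd n" and "n \<noteq> 1"
  shows "bernoulli_num n = 0"
  using arg_cong[OF bern_gf_compose_minus, of "\<lambda>f. f $ n"] assms
  by (simp add: fps_compose_uminus' bernoulli_num_def poly_bernpoly fps_mult_nth)

lemma Ppoly_reflect:
  assumes "k \<ge> 1"
  shows "poly (Ppoly k) (- y - 1) = (-1) ^ (k + 1) * poly (Ppoly k) y"
proof -
  have "(-1) ^ (k + 1) * bernoulli_num (k + 1) = bernoulli_num (k + 1)"
    using assms bernoulli_num_odd[of "k + 1"] by (cases "even k") auto
  then show ?thesis
    using bernpoly_reflect[of "k + 1" y]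
    by (simp add: Ppoly_def poly_pcompose field_simps)
qed

lemma Ppoly_0:
  assumes "k \<ge> 1"
  shows "poly (Ppoly k) 0 = 0"
  using Ppoly_reflect[OF assms, of 0] by (simp add: Ppoly_def poly_pcompose bernoulli_num_def)

lemma poly_ext_sum:
  assumes "degree h \<le> n"
  shows "poly (ext_sum h u) x
    = coeff h 0 * poly u x + (\<Sum>k=1..n. coeff h k * poly (Ppoly k) (poly u x))"
proof -
  have "(\<Sum>k=1..degree h. coeff h k * poly (Ppoly k) (poly u x))
      = (\<Sum>k=1..n. coeff h k * poly (Ppoly k) (poly u x))"
    by (rule sum.mono_neutral_left) (use assms in \<open>auto simp: coeff_eq_0\<close>)
  then show ?thesis
    by (simp add: ext_sum_def poly_sum poly_pcompose)
qed

lemma ext_sum_eq_0_at_root: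
  assumes "poly u x = 0"
  shows "poly (ext_sum h u) x = 0"
  using assms by (simp add: poly_ext_sum[OF order_refl] Ppoly_0)

lemma ext_sum_smult: "ext_sum (smult c h) u = smult c (ext_sum h u)"
proof (rule poly_ext)
  fix x
  have "degree (smult c h) \<le> degree h" by simp
  then show "poly (ext_sum (smult c h) u) x = poly (smult c (ext_sum h u)) x"
    by (simp add: poly_ext_sum[of _ "degree h"] sum_distrib_left algebra_simps)
qed

lemma ext_sum_pcompose: "pcompose (ext_sum h u) q = ext_sum h (pcompose u q)"
  by (simp add: ext_sum_def pcompose_add pcompose_smult pcompose_sum pcompose_assoc)

lemma ext_sum_reflect:
  "ext_sum h (- u - 1) = - [:poly h 0:] - ext_sum (pcompose h [:0, -1:]) u"
proof (rule poly_ext)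
  fix x
  let ?y = "poly u x"
  have "degree (pcompose h [:0, -1:]) = degree h"
    by (simp add: degree_pcompose)
  then have "poly (ext_sum (pcompose h [:0, -1:]) u) x
      = coeff h 0 * ?y + (\<Sum>k=1..degree h. (-1) ^ k * coeff h k * poly (Ppoly k) ?y)"
    by (simp add: poly_ext_sum[of _ "degree h"] coeff_pcompose_linear poly_0_coeff_0)
  moreover have "poly (ext_sum h (- u - 1)) x
      = coeff h 0 * (- ?y - 1) - (\<Sum>k=1..degree h. (-1) ^ k * coeff h k * poly (Ppoly k) ?y)"
    by (simp add: poly_ext_sum[OF order_refl] Ppoly_reflect sum_negf[symmetric] mult_ac)
  ultimately show "poly (ext_sum h (- u - 1)) x
      = poly (- [:poly h 0:] - ext_sum (pcompose h [:0, -1:]) u) x"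
    by (simp add: poly_0_coeff_0 algebra_simps)
qed

lemma ext_sum_bar_limit:
  assumes "c \<noteq> 0" and "c < 0 \<Longrightarrow> poly h 0 = 0"
  shows "ext_sum (pcompose h [:0, sgn c:]) [:0, c:] = smult (sgn c) (ext_sum h (bar_limit c))"
proof (cases "c > 0")
  case True
  then show ?thesis by (simp add: bar_limit_def)
next
  case False
  with assms have "c < 0" by simp
  have "ext_sum h (bar_limit c) = ext_sum h (- [:0, c:] - 1)"
    using \<open>c < 0\<close> by (simp add: bar_limit_def one_pCons)
  also have "\<dots> = - ext_sum (pcompose h [:0, -1:]) [:0, c:]"
    unfolding ext_sum_reflect using assms \<open>c < 0\<close> by simp
  finally show ?thesis
    using \<open>c < 0\<close> by simp
qed

fun map_with_prev :: "('a \<Rightarrow> 'a \<Rightarrow> 'b) \<Rightarrow> 'a \<Rightarrow> 'a list \<Rightarrow> 'b list" where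
  "map_with_prev f p [] = []"
| "map_with_prev f p (x # xs) = f x p # map_with_prev f x xs"

lemma map_upt_with_prev:
  "map (\<lambda>j. f (b j) (b (j - 1))) [Suc i..<Suc i + k]
    = map_with_prev f (b i) (map b [Suc i..<Suc i + k])"
proof (induction k arbitrary: i)
  case (Suc k)
  have "[Suc i..<Suc i + Suc k] = Suc i # [Suc (Suc i)..<Suc (Suc i) + k]"
    by (simp add: upt_conv_Cons)
  then show ?case using Suc.IH[of "Suc i"] by simp
qed simp

lemma nested_ratios:
  assumes "p \<noteq> 0" and "\<forall>x\<in>set xs. x \<noteq> 0" and "xs \<noteq> [] \<Longrightarrow> last xs > 0"
  shows "nested (map_with_prev (/) p xs)
    = smult (sgn (prod_list xs))
        (pcompose (nested_bar (map_with_prev (\<lambda>x q. x / \<bar>q\<bar>) p xs)) [:0, sgn p:])"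
  using assms
proof (induction xs arbitrary: p)
  case Nil
  then show ?case by (simp add: pcompose_1)
next
  case (Cons y ys)
  let ?N = "nested (map_with_prev (/) y ys)"
  let ?H = "nested_bar (map_with_prev (\<lambda>x q. x / \<bar>q\<bar>) y ys)"
  let ?s = "sgn (prod_list ys)"
  define c where "c = y / \<bar>p\<bar>"
  have "y \<noteq> 0" and "?s \<noteq> 0"
    using Cons.prems by (auto simp: prod_list_zero_iff sgn_0_0)
  have IH: "?N = smult ?s (pcompose ?H [:0, sgn y:])"
    using Cons.IH \<open>y \<noteq> 0\<close> Cons.prems by (cases "ys = []") auto
  have "c \<noteq> 0" and "sgn c = sgn y"
    using \<open>y \<noteq> 0\<close> Cons.prems by (auto simp: c_def sgn_mult)
  have "poly ?H 0 = 0" if "c < 0"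
  proof -
    from that have "ys \<noteq> []"
      using Cons.prems by (auto simp: c_def divide_less_0_iff)
    then have "poly ?N 0 = 0"
      by (cases ys) (simp_all add: ext_sum_eq_0_at_root)
    with IH \<open>?s \<noteq> 0\<close> show ?thesis
      by (simp add: poly_pcompose)
  qed
  then have layer:
    "ext_sum (pcompose ?H [:0, sgn c:]) [:0, c:] = smult (sgn c) (ext_sum ?H (bar_limit c))"
    using \<open>c \<noteq> 0\<close> by (rule ext_sum_bar_limit[rotated])
  have "[:0, y / p:] = pcompose [:0, c:] [:0, sgn p:]"
    using Cons.prems by (simp add: c_def pcompose_pCons sgn_if)
  then have "nested (map_with_prev (/) p (y # ys))
      = smult ?s (pcompose (ext_sum (pcompose ?H [:0, sgn c:]) [:0, c:]) [:0, sgn p:])"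
    by (simp add: IH ext_sum_smult ext_sum_pcompose \<open>sgn c = sgn y\<close>)
  also have "\<dots> = smult ?s (pcompose (smult (sgn y) (ext_sum ?H (bar_limit c))) [:0, sgn p:])"
    unfolding layer by (simp only: \<open>sgn c = sgn y\<close>)
  also have "\<dots> = smult (sgn (prod_list (y # ys)))
      (pcompose (nested_bar (map_with_prev (\<lambda>x q. x / \<bar>q\<bar>) p (y # ys))) [:0, sgn p:])"
    by (simp add: pcompose_smult c_def sgn_mult mult.commute)
  finally show ?case .
qed

theorem mainTheorem12:
  fixes d :: nat and b :: "nat \<Rightarrow> real"
  assumes b0: "b 0 = 1"
    and nz: "\<forall>i\<in>{1..d}. b i \<noteq> 0"
    and pos: "b d > 0"
  shows "g_d d b = f_d (map (\<lambda>i. b i / b (i - 1)) [1..<Suc d])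
    \<and> g_d d b = sgn (\<Prod>i\<in>{1..d}. b i)
        * f_bar (map (\<lambda>i. b i / \<bar>b (i - 1)\<bar>) [1..<Suc d])"
proof -
  define bs where "bs = map b [1..<Suc d]"
  have ratios: "map (\<lambda>i. b i / b (i - 1)) [1..<Suc d] = map_with_prev (/) 1 bs"
    and abs_ratios: "map (\<lambda>i. b i / \<bar>b (i - 1)\<bar>) [1..<Suc d]
      = map_with_prev (\<lambda>x q. x / \<bar>q\<bar>) 1 bs"
    using map_upt_with_prev[of _ b 0 d] by (simp_all only: bs_def b0 add_Suc add_0 One_nat_def)
  have "prod_list bs = (\<Prod>i\<in>{1..d}. b i)"
    by (simp add: bs_def prod.distinct_set_conv_list[symmetric] atLeastLessThanSuc_atLeastAtMost
        del: upt_Suc)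
  moreover have "bs \<noteq> [] \<Longrightarrow> last bs > 0"
    using pos by (cases d) (auto simp: bs_def)
  moreover have "\<forall>x\<in>set bs. x \<noteq> 0"
    using nz by (auto simp: bs_def)
  ultimately have "poly (nested (map_with_prev (/) 1 bs)) 1
      = sgn (\<Prod>i\<in>{1..d}. b i) * f_bar (map_with_prev (\<lambda>x q. x / \<bar>q\<bar>) 1 bs)"
    using nested_ratios[of 1 bs] by (simp add: f_bar_def poly_pcompose)
  then show ?thesis
    by (simp only: g_d_def f_d_def ratios abs_ratios simp_thms)
qed

end
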